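(* Let $(X,d,\mu)$ be a space of homogeneous type, let $p(\cdot)$ be an exponent, and let $w\in A_{p(\cdot)}$. Then there exists a constant $C$ depending on $p(\cdot)$ and $w$ such that for every ball $B$ and every measurable set $E\subset B$, \[ \frac{\mu(E)}{\mu(B)}\le C\,\frac{\|w\chi_E\|_{p(\cdot)}}{\|w\chi_B\|_{p(\cdot)}}. \]
   Context: A space of homogeneous type $(X,d,\mu)$: $X$ nonempty, $d$ a quasi-metric ($d(x,y)=0$ iff $x=y$, symmetric, $d(x,y)\le A_0(d(x,z)+d(z,y))$ for some $A_0\ge1$), $\mu$ a regular measure on the $\sigma$-algebra generated by balls $B(x,r)=\{y:d(x,y)<r\}$ and open sets, with $0<\mu(B(x,2r))\le C_\mu\mu(B(x,r))<\infty$. An exponent is a measurable $p:X\to[1,\infty]$. With $X_\infty=\{p=\infty\}$, $\rho_{p(\cdot)}(f)=\int_{X\setminus X_\infty}|f(x)|^{p(x)}d\mu+\|f\|_{L^\infty(X_\infty)}$ and $\|f\|_{p(\cdot)}=\inf\{\lambda>0:\rho_{p(\cdot)}(f/\lambda)\le1\}$; $p'(x)=p(x)/(p(x)-1)$ (with $1/0=\infty$, $1/\infty=0$). A weight is a locally integrable $w:X\to[0,\infty]$ with $0<w<\infty$ a.e.; $w\in A_{p(\cdot)}$ means there is $K$ with $\|w\chi_B\|_{p(\cdot)}\|w^{-1}\chi_B\|_{p'(\cdot)}\le K\mu(B)$ for every ball $B$. *)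

theory Defs
  imports "HOL-Analysis.Analysis"
begin

text \<open>The underlying set X is represented by space M.\<close>

definition qball :: "'a set \<Rightarrow> ('a \<Rightarrow> 'a \<Rightarrow> real) \<Rightarrow> 'a \<Rightarrow> real \<Rightarrow> 'a set" where
  "qball X d x r = {y \<in> X. d x y < r}"

definition is_qball :: "'a set \<Rightarrow> ('a \<Rightarrow> 'a \<Rightarrow> real) \<Rightarrow> 'a set \<Rightarrow> bool" where
  "is_qball X d B \<longleftrightarrow> (\<exists>x\<in>X. \<exists>r>0. B = qball X d x r)"

definition qopen :: "'a set \<Rightarrow> ('a \<Rightarrow> 'a \<Rightarrow> real) \<Rightarrow> 'a set \<Rightarrow> bool" where
  "qopen X d U \<longleftrightarrow> U \<subseteq> X \<and> (\<forall>x\<in>U. \<exists>r>0. qball X d x r \<subseteq> U)"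

definition quasi_metric :: "'a set \<Rightarrow> ('a \<Rightarrow> 'a \<Rightarrow> real) \<Rightarrow> real \<Rightarrow> bool" where
  "quasi_metric X d A0 \<longleftrightarrow> A0 \<ge> 1 \<and>
     (\<forall>x\<in>X. \<forall>y\<in>X. d x y \<ge> 0 \<and> (d x y = 0 \<longleftrightarrow> x = y) \<and> d x y = d y x) \<and>
     (\<forall>x\<in>X. \<forall>y\<in>X. \<forall>z\<in>X. d x y \<le> A0 * (d x z + d z y))"

definition regular_measure :: "('a \<Rightarrow> 'a \<Rightarrow> real) \<Rightarrow> 'a measure \<Rightarrow> bool" where
  "regular_measure d M \<longleftrightarrow>
     (\<forall>E\<in>sets M. emeasure M E =
        (INF U\<in>{U. qopen (space M) d U \<and> E \<subseteq> U}. emeasure M U))"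

definition homogeneous_type :: "('a \<Rightarrow> 'a \<Rightarrow> real) \<Rightarrow> 'a measure \<Rightarrow> bool" where
  "homogeneous_type d M \<longleftrightarrow> space M \<noteq> {} \<and>
     (\<exists>A0. quasi_metric (space M) d A0) \<and>
     sets M = sigma_sets (space M)
        ({B. is_qball (space M) d B} \<union> {U. qopen (space M) d U}) \<and>
     regular_measure d M \<and>
     (\<exists>C\<mu>. \<forall>x\<in>space M. \<forall>r>0.
        0 < emeasure M (qball (space M) d x (2*r)) \<and>
        emeasure M (qball (space M) d x (2*r)) \<le> ennreal C\<mu> * emeasure M (qball (space M) d x r) \<and>
        emeasure M (qball (space M) d x r) < \<infinity>)"

definition exponent :: "'a measure \<Rightarrow> ('a \<Rightarrow> ereal) \<Rightarrow> bool" where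
  "exponent M p \<longleftrightarrow> p \<in> borel_measurable M \<and> (\<forall>x\<in>space M. 1 \<le> p x)"

text \<open>Conjugate exponent, with 1/0 = infinity and 1/infinity = 0.\<close>
definition conj_exp :: "('a \<Rightarrow> ereal) \<Rightarrow> 'a \<Rightarrow> ereal" where
  "conj_exp p x = (if p x = 1 then \<infinity> else if p x = \<infinity> then 1
                   else ereal (real_of_ereal (p x) / (real_of_ereal (p x) - 1)))"

definition enn_pow :: "ennreal \<Rightarrow> real \<Rightarrow> ennreal" where
  "enn_pow t q = (if t = \<infinity> then \<infinity> else ennreal (enn2real t powr q))"

definition Linf_on :: "'a measure \<Rightarrow> 'a set \<Rightarrow> ('a \<Rightarrow> ennreal) \<Rightarrow> ennreal" where
  "Linf_on M S f = Inf {c. AE x in M. x \<in> S \<longrightarrow> f x \<le> c}"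

definition modular :: "'a measure \<Rightarrow> ('a \<Rightarrow> ereal) \<Rightarrow> ('a \<Rightarrow> ennreal) \<Rightarrow> ennreal" where
  "modular M p f =
     (\<integral>\<^sup>+ x. indicator {x \<in> space M. p x \<noteq> \<infinity>} x * enn_pow (f x) (real_of_ereal (p x)) \<partial>M)
     + Linf_on M {x \<in> space M. p x = \<infinity>} f"

definition vnorm :: "'a measure \<Rightarrow> ('a \<Rightarrow> ereal) \<Rightarrow> ('a \<Rightarrow> ennreal) \<Rightarrow> ennreal" where
  "vnorm M p f = Inf {ennreal t | t. t > 0 \<and> modular M p (\<lambda>x. f x / ennreal t) \<le> 1}"

definition weight :: "('a \<Rightarrow> 'a \<Rightarrow> real) \<Rightarrow> 'a measure \<Rightarrow> ('a \<Rightarrow> ennreal) \<Rightarrow> bool" where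
  "weight d M w \<longleftrightarrow> w \<in> borel_measurable M \<and>
     (\<forall>B. is_qball (space M) d B \<longrightarrow> (\<integral>\<^sup>+ x\<in>B. w x \<partial>M) < \<infinity>) \<and>
     (AE x in M. 0 < w x \<and> w x < \<infinity>)"

definition A_p :: "('a \<Rightarrow> 'a \<Rightarrow> real) \<Rightarrow> 'a measure \<Rightarrow> ('a \<Rightarrow> ereal) \<Rightarrow> ('a \<Rightarrow> ennreal) \<Rightarrow> bool" where
  "A_p d M p w \<longleftrightarrow> weight d M w \<and>
     (\<exists>K::real. \<forall>B. is_qball (space M) d B \<longrightarrow>
        vnorm M p (\<lambda>x. w x * indicator B x) * vnorm M (conj_exp p) (\<lambda>x. inverse (w x) * indicator B x)
          \<le> ennreal K * emeasure M B)"

end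

theory Submission
  imports Defs
begin

text \<open>
  Since \<open>0 < w < \<infinity>\<close> a.e. and \<open>E \<subseteq> B\<close>, \<open>\<mu>(E) = \<integral> (w \<chi>\<^sub>E) (w\<^sup>-\<^sup>1 \<chi>\<^sub>B)\<close>.
  Hoelder's inequality for variable exponents bounds this by
  \<open>2 \<parallel>w \<chi>\<^sub>E\<parallel>\<^sub>p \<parallel>w\<^sup>-\<^sup>1 \<chi>\<^sub>B\<parallel>\<^sub>p\<^sub>'\<close>, and the \<open>A\<^sub>p\<close> condition gives
  \<open>\<parallel>w\<^sup>-\<^sup>1 \<chi>\<^sub>B\<parallel>\<^sub>p\<^sub>' \<le> K \<mu>(B) / \<parallel>w \<chi>\<^sub>B\<parallel>\<^sub>p\<close>, so \<open>C = 2 K\<close> works.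
  The division is legitimate because both norms of the \<open>A\<^sub>p\<close> product are nonzero
  (a Luxemburg norm vanishes only on null functions, \<open>w > 0\<close> a.e., and balls have
  positive measure) and hence, the product being finite, both are finite.
\<close>

lemma ennreal_le_divide_iff:
  fixes a b c :: ennreal
  assumes "0 < c" and "c < top"
  shows "a \<le> b / c \<longleftrightarrow> a * c \<le> b"
proof -
  obtain t where "c = ennreal t" "0 < t"
    using assms by (cases c rule: ennreal_cases) auto
  then show ?thesis
    by (cases a b rule: ennreal2_cases)
      (auto simp: divide_ennreal ennreal_mult[symmetric] field_simps ennreal_top_divide ennreal_mult_top top_unique)
qed

lemma ennreal_divide_le_iff:
  fixes a b c :: ennreal
  assumes "0 < c" and "c < top"
  shows "b / c \<le> a \<longleftrightarrow> b \<le> a * c"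
proof -
  obtain t where "c = ennreal t" "0 < t"
    using assms by (cases c rule: ennreal_cases) auto
  then show ?thesis
    by (cases a b rule: ennreal2_cases)
      (auto simp: divide_ennreal ennreal_mult[symmetric] field_simps ennreal_top_divide ennreal_mult_top top_unique)
qed

lemma ennreal_eq_0_if_le_inverse_Suc:
  fixes x :: ennreal
  assumes "\<And>n. x \<le> ennreal (1 / Suc n)"
  shows "x = 0"
proof -
  have "x \<le> 0 + ennreal e" if e: "0 < e" for e
  proof -
    obtain n where "inverse (real (Suc n)) < e"
      using reals_Archimedean[OF e] ..
    then have "ennreal (1 / Suc n) \<le> ennreal e"
      by (intro ennreal_leI) (simp add: inverse_eq_divide)
    then show ?thesis
      using order_trans[OF assms[of n]] by simp
  qed
  then have "x \<le> 0"
    by (rule ennreal_le_epsilon)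
  then show ?thesis
    by simp
qed

lemma le_mult_Inf_ennreal:
  fixes X k :: ennreal
  assumes "\<And>s. s \<in> S \<Longrightarrow> X \<le> k * s" and "0 < k" and "k < top"
  shows "X \<le> k * Inf S"
proof -
  have "X / k \<le> Inf S"
    using assms by (intro Inf_greatest divide_le_posI_ennreal) auto
  then have "k * (X / k) \<le> k * Inf S"
    by (rule mult_left_mono) simp
  moreover have "k * (X / k) = X"
    using assms(2,3) by (metis ennreal_times_divide mult.commute mult_divide_eq_ennreal not_less_iff_gr_or_eq)
  ultimately show ?thesis
    by simp
qed

lemma ennreal_ratio_le:
  fixes a b c e m k K :: ennreal
  assumes "e \<le> k * a * c" and "b * c \<le> K * m"
    and "0 < b" "b < top" and "0 < m" "m < top"
  shows "e / m \<le> k * K * (a / b)"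
proof -
  have "c \<le> K * m / b"
    using assms(2-4) by (simp add: ennreal_le_divide_iff mult.commute)
  then have "c / m \<le> K / b"
    using assms(5,6) by (simp add: ennreal_divide_le_iff ennreal_times_divide ennreal_divide_times mult.commute)
  have "e / m \<le> k * a * c / m"
    using assms(1) by (rule divide_right_mono_ennreal)
  also have "\<dots> = k * a * (c / m)"
    by (simp add: ennreal_times_divide)
  also have "\<dots> \<le> k * a * (K / b)"
    using \<open>c / m \<le> K / b\<close> by (rule mult_left_mono) simp
  also have "\<dots> = k * K * (a / b)"
    by (simp add: ennreal_times_divide mult_ac)
  finally show ?thesis .
qed

lemma measurable_enn_pow [measurable]:
  assumes [measurable]: "f \<in> borel_measurable M" "q \<in> borel_measurable M"
  shows "(\<lambda>x. enn_pow (f x) (q x)) \<in> borel_measurable M"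
  unfolding enn_pow_def by measurable

lemma measurable_conj_exp [measurable]:
  assumes [measurable]: "p \<in> borel_measurable M"
  shows "conj_exp p \<in> borel_measurable M"
  unfolding conj_exp_def by measurable

lemma conj_exp_eq_infinity_iff: "conj_exp p x = \<infinity> \<longleftrightarrow> p x = 1"
  by (simp add: conj_exp_def)

lemma exponent_conj_exp:
  assumes "exponent M p"
  shows "exponent M (conj_exp p)"
proof -
  have "1 \<le> conj_exp p x" if "1 \<le> p x" for x
    using that by (cases "p x") (auto simp: conj_exp_def field_simps)
  then show ?thesis
    using assms by (auto simp: exponent_def)
qed

lemma enn_pow_1 [simp]: "enn_pow t 1 = t"
  by (cases t rule: ennreal_cases) (simp_all add: enn_pow_def)

lemma le_enn_pow:
  assumes "1 \<le> t" and "1 \<le> q"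
  shows "t \<le> enn_pow t q"
proof (cases t rule: ennreal_cases)
  case (real r)
  then have "1 \<le> r"
    using assms(1) by (simp add: ennreal_1[symmetric] del: ennreal_1)
  then have "r powr 1 \<le> r powr q"
    using assms(2) by (intro powr_mono) auto
  then show ?thesis
    using real \<open>1 \<le> r\<close> by (simp add: enn_pow_def)
qed (simp add: enn_pow_def)

lemma young_ennreal:
  assumes "1 < q"
  shows "a * b \<le> enn_pow a q + enn_pow b (q / (q - 1))"
proof (cases "a = top \<or> b = top")
  case True
  then show ?thesis by (auto simp: enn_pow_def)
next
  case False
  then obtain x y where a: "a = ennreal x" "0 \<le> x" and b: "b = ennreal y" "0 \<le> y"
    by (metis ennreal_cases)
  define q' where "q' = q / (q - 1)"
  have "1 < q'" and "1 / q + 1 / q' = 1"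
    using assms by (simp_all add: q'_def field_simps)
  then have "x * y \<le> x powr q / q + y powr q' / q'"
    using assms a b by (intro Youngs_inequality) auto
  also have "\<dots> \<le> x powr q + y powr q'"
    using assms \<open>1 < q'\<close> by (intro add_mono) (simp_all add: divide_le_eq mult_le_cancel_left1)
  finally show ?thesis
    using a b by (simp add: q'_def enn_pow_def flip: ennreal_mult ennreal_plus)
qed

definition modular_density :: "ereal \<Rightarrow> ennreal \<Rightarrow> ennreal" where
  "modular_density q t = (if q = \<infinity> then 0 else enn_pow t (real_of_ereal q))"

lemma measurable_modular_density [measurable]:
  assumes [measurable]: "p \<in> borel_measurable M" "f \<in> borel_measurable M"
  shows "(\<lambda>x. modular_density (p x) (f x)) \<in> borel_measurable M"
  unfolding modular_density_def by measurable

lemma modular_altdef: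
  "modular M p f = (\<integral>\<^sup>+x. modular_density (p x) (f x) \<partial>M) + Linf_on M {x \<in> space M. p x = \<infinity>} f"
  unfolding modular_def
  by (intro arg_cong2[where f = "(+)"] nn_integral_cong refl) (simp add: modular_density_def)

(* Where p = \<infinity> (resp. p = 1) Young's inequality degenerates to a b \<le> b (resp. a b \<le> a) and
   needs the other factor to be at most 1; in holder_modular the L\<infinity> part of the modular
   provides this bound almost everywhere. *)
lemma young_modular_density:
  assumes "1 \<le> p x" and "p x = \<infinity> \<Longrightarrow> a \<le> 1" and "p x = 1 \<Longrightarrow> b \<le> 1"
  shows "a * b \<le> modular_density (p x) a + modular_density (conj_exp p x) b"
proof -
  consider "p x = \<infinity>" | "p x = 1" | q where "p x = ereal q" "1 < q"
    using assms(1) by (cases "p x") force+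
  then show ?thesis
  proof cases
    case 1
    then have "a * b \<le> 1 * b"
      using assms(2) by (intro mult_right_mono) auto
    then show ?thesis
      using 1 by (simp add: modular_density_def conj_exp_def)
  next
    case 2
    then have "a * b \<le> a * 1"
      using assms(3) by (intro mult_left_mono) auto
    then show ?thesis
      using 2 by (simp add: modular_density_def conj_exp_def)
  next
    case 3
    then show ?thesis
      using young_ennreal[of q a b] by (simp add: modular_density_def conj_exp_def)
  qed
qed

lemma AE_le_Linf_on: "AE x in M. x \<in> S \<longrightarrow> f x \<le> Linf_on M S f"
proof -
  let ?C = "{c. AE x in M. x \<in> S \<longrightarrow> f x \<le> c}"
  have "top \<in> ?C"
    by simp
  then obtain c :: "nat \<Rightarrow> ennreal" where c: "range c \<subseteq> ?C" "Inf ?C = (INF i. c i)"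
    using ennreal_Inf_countable_INF[of ?C] by blast
  then have "AE x in M. \<forall>i. x \<in> S \<longrightarrow> f x \<le> c i"
    by (intro AE_all_countable[THEN iffD2]) auto
  then show ?thesis
    unfolding Linf_on_def c(2) by eventually_elim (auto intro: INF_greatest)
qed

lemma AE_le_1_if_modular_le_1:
  assumes "modular M p f \<le> 1"
  shows "AE x in M. p x = \<infinity> \<longrightarrow> f x \<le> 1"
proof -
  have L: "Linf_on M {x \<in> space M. p x = \<infinity>} f \<le> 1"
    using assms unfolding modular_def by (rule order_trans[rotated]) simp
  from AE_le_Linf_on[where M = M and S = "{x \<in> space M. p x = \<infinity>}" and f = f] AE_space
  show ?thesis
    by eventually_elim (auto intro: order_trans[OF _ L])
qed

lemma mult_emeasure_le_modular:
  assumes "exponent M p" and [measurable]: "A \<in> sets M"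
    and "\<And>x. x \<in> A \<Longrightarrow> p x \<noteq> \<infinity>" and "1 \<le> c" and "\<And>x. x \<in> A \<Longrightarrow> c \<le> f x"
  shows "c * emeasure M A \<le> modular M p f"
proof -
  have "c * emeasure M A = (\<integral>\<^sup>+x. c * indicator A x \<partial>M)"
    by (simp add: nn_integral_cmult_indicator)
  also have "\<dots> \<le> (\<integral>\<^sup>+x. modular_density (p x) (f x) \<partial>M)"
  proof (rule nn_integral_mono)
    fix x assume "x \<in> space M"
    show "c * indicator A x \<le> modular_density (p x) (f x)"
    proof (cases "x \<in> A")
      case True
      then have "1 \<le> real_of_ereal (p x)"
        using assms(1,3) \<open>x \<in> space M\<close> by (cases "p x") (auto simp: exponent_def)
      moreover have "1 \<le> f x"
        using assms(4) assms(5)[OF True] by (rule order_trans)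
      ultimately show ?thesis
        using assms(3,5) True le_enn_pow[of "f x"] by (force simp: modular_density_def)
    qed simp
  qed
  also have "\<dots> \<le> modular M p f"
    by (simp add: modular_altdef)
  finally show ?thesis .
qed

lemma holder_modular:
  assumes p: "exponent M p" and [measurable]: "f \<in> borel_measurable M" "g \<in> borel_measurable M"
    and f: "modular M p f \<le> 1" and g: "modular M (conj_exp p) g \<le> 1"
  shows "(\<integral>\<^sup>+x. f x * g x \<partial>M) \<le> 2"
proof -
  have [measurable]: "p \<in> borel_measurable M"
    using p by (simp add: exponent_def)
  have "AE x in M. p x = \<infinity> \<longrightarrow> f x \<le> 1"
    using f by (rule AE_le_1_if_modular_le_1)
  moreover have "AE x in M. conj_exp p x = \<infinity> \<longrightarrow> g x \<le> 1"
    using g by (rule AE_le_1_if_modular_le_1)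
  ultimately have "AE x in M. f x * g x \<le> modular_density (p x) (f x) + modular_density (conj_exp p x) (g x)"
    using AE_space
  proof eventually_elim
    case (elim x)
    then show ?case
      using p by (intro young_modular_density) (auto simp: exponent_def conj_exp_eq_infinity_iff)
  qed
  then have "(\<integral>\<^sup>+x. f x * g x \<partial>M)
      \<le> (\<integral>\<^sup>+x. modular_density (p x) (f x) + modular_density (conj_exp p x) (g x) \<partial>M)"
    by (rule nn_integral_mono_AE)
  also have "\<dots> = (\<integral>\<^sup>+x. modular_density (p x) (f x) \<partial>M) + (\<integral>\<^sup>+x. modular_density (conj_exp p x) (g x) \<partial>M)"
    by (rule nn_integral_add) measurable
  also have "\<dots> \<le> modular M p f + modular M (conj_exp p) g"
    by (intro add_mono) (simp_all add: modular_altdef)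
  also have "\<dots> \<le> 2"
    using add_mono[OF f g] by (simp add: one_add_one)
  finally show ?thesis .
qed

lemma holder_modular_scaled:
  assumes "exponent M p" and [measurable]: "f \<in> borel_measurable M" "g \<in> borel_measurable M"
    and "0 < s" "modular M p (\<lambda>x. f x / ennreal s) \<le> 1"
    and "0 < t" "modular M (conj_exp p) (\<lambda>x. g x / ennreal t) \<le> 1"
  shows "(\<integral>\<^sup>+x. f x * g x \<partial>M) \<le> 2 * ennreal s * ennreal t"
proof -
  have cancel: "ennreal r * (h / ennreal r) = h" if "0 < r" for r h
    using that by (simp add: ennreal_times_divide mult.commute[of "ennreal r"] mult_divide_eq_ennreal)
  have "f x * g x = (ennreal s * ennreal t) * ((f x / ennreal s) * (g x / ennreal t))" for x
  proof -
    have "(ennreal s * ennreal t) * ((f x / ennreal s) * (g x / ennreal t))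
        = (ennreal s * (f x / ennreal s)) * (ennreal t * (g x / ennreal t))"
      by (simp only: mult_ac)
    then show ?thesis
      using assms(4,6) by (simp add: cancel)
  qed
  then have "(\<integral>\<^sup>+x. f x * g x \<partial>M)
      = (ennreal s * ennreal t) * (\<integral>\<^sup>+x. (f x / ennreal s) * (g x / ennreal t) \<partial>M)"
    by (simp add: nn_integral_cmult)
  also have "\<dots> \<le> (ennreal s * ennreal t) * 2"
    using assms by (intro mult_left_mono holder_modular) auto
  finally show ?thesis
    by (simp add: mult_ac)
qed

(* The second norm is assumed positive and finite so that taking infima never meets 0 * \<infinity>. *)
lemma holder_vnorm:
  assumes "exponent M p" and [measurable]: "f \<in> borel_measurable M" "g \<in> borel_measurable M"
    and "0 < vnorm M (conj_exp p) g" "vnorm M (conj_exp p) g < top"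
  shows "(\<integral>\<^sup>+x. f x * g x \<partial>M) \<le> 2 * vnorm M p f * vnorm M (conj_exp p) g"
proof -
  let ?c = "vnorm M (conj_exp p) g"
  have "(\<integral>\<^sup>+x. f x * g x \<partial>M) \<le> (2 * ennreal s) * ?c"
    if "0 < s" "modular M p (\<lambda>x. f x / ennreal s) \<le> 1" for s
    unfolding vnorm_def[of M "conj_exp p" g]
    using holder_modular_scaled[OF assms(1-3) that] that(1)
    by (intro le_mult_Inf_ennreal) (auto simp: ennreal_mult_less_top ennreal_zero_less_mult_iff mult.assoc)
  then have "(\<integral>\<^sup>+x. f x * g x \<partial>M) \<le> (2 * ?c) * vnorm M p f"
    unfolding vnorm_def[of M p f] using assms(4,5)
    by (intro le_mult_Inf_ennreal) (auto simp: ennreal_mult_less_top ennreal_zero_less_mult_iff mult_ac)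
  then show ?thesis
    by (simp add: mult_ac)
qed

lemma modular_scaled_le_1_if_vnorm_less:
  assumes "vnorm M p f < ennreal e"
  shows "\<exists>t. 0 < t \<and> t < e \<and> modular M p (\<lambda>x. f x / ennreal t) \<le> 1"
  using assms by (auto simp: vnorm_def Inf_less_iff ennreal_less_iff)

lemma emeasure_superlevel_finite_exponent_eq_0:
  assumes "exponent M p" and [measurable]: "f \<in> borel_measurable M"
    and "vnorm M p f = 0" and "0 < \<eta>"
  shows "emeasure M {x \<in> space M. p x \<noteq> \<infinity> \<and> ennreal \<eta> < f x} = 0"
proof (rule ennreal_eq_0_if_le_inverse_Suc)
  fix n
  define A where "A = {x \<in> space M. p x \<noteq> \<infinity> \<and> ennreal \<eta> < f x}"
  have [measurable]: "p \<in> borel_measurable M"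
    using assms(1) by (simp add: exponent_def)
  have [measurable]: "A \<in> sets M"
    unfolding A_def by measurable
  obtain t where t: "0 < t" "t < \<eta> / Suc n" "modular M p (\<lambda>x. f x / ennreal t) \<le> 1"
    using modular_scaled_le_1_if_vnorm_less[of M p f "\<eta> / Suc n"] assms(3,4) by auto
  have "ennreal (Suc n) \<le> f x / ennreal t" if "x \<in> A" for x
  proof -
    have "ennreal (Suc n * t) \<le> ennreal \<eta>"
      using t by (intro ennreal_leI) (simp add: field_simps)
    also have "\<dots> \<le> f x"
      using that by (simp add: A_def less_imp_le)
    finally show ?thesis
      using t by (simp add: ennreal_le_divide_iff ennreal_mult)
  qed
  then have "ennreal (Suc n) * emeasure M A \<le> modular M p (\<lambda>x. f x / ennreal t)"
    by (intro mult_emeasure_le_modular[OF assms(1)]) (auto simp: A_def)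
  then have "emeasure M A * ennreal (Suc n) \<le> 1"
    using t(3) by (simp add: mult.commute del: of_nat_Suc)
  moreover have "0 < ennreal (Suc n)" "ennreal (Suc n) < top"
    by (simp_all del: of_nat_Suc)
  ultimately have "emeasure M A \<le> 1 / ennreal (Suc n)"
    using ennreal_le_divide_iff by blast
  also have "\<dots> = ennreal (1 / Suc n)"
    using divide_ennreal[of 1 "Suc n"] by simp
  finally show "emeasure M A \<le> ennreal (1 / Suc n)" .
qed

lemma AE_eq_0_if_vnorm_eq_0:
  assumes "exponent M p" and [measurable]: "f \<in> borel_measurable M" and "vnorm M p f = 0"
  shows "AE x in M. f x = 0"
proof -
  have [measurable]: "p \<in> borel_measurable M"
    using assms(1) by (simp add: exponent_def)
  have "AE x in M. f x \<le> ennreal \<eta>" if \<eta>: "0 < \<eta>" for \<eta>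
  proof -
    define A where "A = {x \<in> space M. p x \<noteq> \<infinity> \<and> ennreal \<eta> < f x}"
    have "A \<in> sets M" and "emeasure M A = 0"
      unfolding A_def using emeasure_superlevel_finite_exponent_eq_0[OF assms \<eta>] by measurable
    then have "AE x in M. x \<notin> A"
      by (intro AE_not_in null_setsI)
    moreover obtain t where t: "0 < t" "t < \<eta>" "modular M p (\<lambda>x. f x / ennreal t) \<le> 1"
      using modular_scaled_le_1_if_vnorm_less[of M p f \<eta>] assms(3) \<eta> by auto
    then have "AE x in M. p x = \<infinity> \<longrightarrow> f x / ennreal t \<le> 1"
      by (intro AE_le_1_if_modular_le_1)
    ultimately show ?thesis
      using AE_space
    proof eventually_elim
      case (elim x)
      then show ?case
        using t by (cases "p x = \<infinity>") (auto simp: A_def ennreal_divide_le_iff order_trans[OF _ ennreal_leI])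
    qed
  qed
  then have "AE x in M. \<forall>n. f x \<le> ennreal (1 / Suc n)"
    by (simp add: AE_all_countable)
  then show ?thesis
    by eventually_elim (simp add: ennreal_eq_0_if_le_inverse_Suc)
qed

lemma
  assumes "homogeneous_type d M" and "is_qball (space M) d B"
  shows sets_qball: "B \<in> sets M"
    and emeasure_qball_pos: "0 < emeasure M B"
    and emeasure_qball_finite: "emeasure M B < \<infinity>"
proof -
  obtain x r where x: "x \<in> space M" "0 < r" "B = qball (space M) d x r"
    using assms(2) unfolding is_qball_def by blast
  have doubling: "\<And>r. 0 < r \<Longrightarrow>
      0 < emeasure M (qball (space M) d x (2 * r)) \<and> emeasure M (qball (space M) d x r) < \<infinity>"
    using assms(1) x(1) unfolding homogeneous_type_def by blast
  show "B \<in> sets M"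
    using assms unfolding homogeneous_type_def by auto
  show "0 < emeasure M B"
    using doubling[of "r / 2"] x by simp
  show "emeasure M B < \<infinity>"
    using doubling[of r] x by simp
qed

lemma vnorm_mult_indicator_neq_0:
  assumes "exponent M p" and [measurable]: "h \<in> borel_measurable M" "B \<in> sets M"
    and "AE x in M. 0 < h x" and "emeasure M B \<noteq> 0"
  shows "vnorm M p (\<lambda>x. h x * indicator B x) \<noteq> 0"
proof
  assume "vnorm M p (\<lambda>x. h x * indicator B x) = 0"
  then have "AE x in M. h x * indicator B x = 0"
    using assms(1) by (intro AE_eq_0_if_vnorm_eq_0) auto
  with assms(4) have "AE x in M. x \<notin> B"
    by eventually_elim (auto split: split_indicator)
  then show False
    using assms(3,5) AE_iff_null_sets null_setsD1 by blast
qed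

lemma emeasure_eq_nn_integral_weight_inverse:
  assumes "AE x in M. 0 < w x \<and> w x < \<infinity>" and "E \<in> sets M" and "E \<subseteq> B"
  shows "emeasure M E = (\<integral>\<^sup>+x. (w x * indicator E x) * (inverse (w x) * indicator B x) \<partial>M)"
proof -
  have "AE x in M. indicator E x = (w x * indicator E x) * (inverse (w x) * indicator B x)"
    using assms(1)
  proof eventually_elim
    case (elim x)
    then have "w x * inverse (w x) = 1"
      by (cases "w x" rule: ennreal_cases) (auto simp: inverse_ennreal ennreal_mult[symmetric])
    then show ?case
      using assms(3) by (auto split: split_indicator)
  qed
  then show ?thesis
    using assms(2) by (simp add: nn_integral_cong_AE flip: nn_integral_indicator)
qed

lemma vnorm_weight_indicator_bounds:
  assumes "homogeneous_type d M" and "exponent M p" and "weight d M w" and B: "is_qball (space M) d B"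
    and K: "vnorm M p (\<lambda>x. w x * indicator B x) * vnorm M (conj_exp p) (\<lambda>x. inverse (w x) * indicator B x)
      \<le> ennreal K * emeasure M B"
  shows "0 < vnorm M p (\<lambda>x. w x * indicator B x)" "vnorm M p (\<lambda>x. w x * indicator B x) < \<infinity>"
    and "0 < vnorm M (conj_exp p) (\<lambda>x. inverse (w x) * indicator B x)"
    "vnorm M (conj_exp p) (\<lambda>x. inverse (w x) * indicator B x) < \<infinity>"
proof -
  have [measurable]: "w \<in> borel_measurable M" and w: "AE x in M. 0 < w x \<and> w x < \<infinity>"
    using assms(3) by (auto simp: weight_def)
  have [measurable]: "B \<in> sets M" and \<mu>B: "0 < emeasure M B" "emeasure M B < \<infinity>"
    using assms(1) B by (rule sets_qball emeasure_qball_pos emeasure_qball_finite)+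
  have "vnorm M p (\<lambda>x. w x * indicator B x) \<noteq> 0"
    using w \<mu>B by (intro vnorm_mult_indicator_neq_0 assms(2)) (auto elim: eventually_mono)
  moreover have "vnorm M (conj_exp p) (\<lambda>x. inverse (w x) * indicator B x) \<noteq> 0"
    using w \<mu>B by (intro vnorm_mult_indicator_neq_0 exponent_conj_exp assms(2))
      (auto elim: eventually_mono simp: ennreal_inverse_positive)
  moreover have "vnorm M p (\<lambda>x. w x * indicator B x) * vnorm M (conj_exp p) (\<lambda>x. inverse (w x) * indicator B x)
      < \<infinity>"
    using K by (rule le_less_trans) (use \<mu>B in \<open>simp add: ennreal_mult_less_top\<close>)
  ultimately show "0 < vnorm M p (\<lambda>x. w x * indicator B x)" "vnorm M p (\<lambda>x. w x * indicator B x) < \<infinity>"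
    and "0 < vnorm M (conj_exp p) (\<lambda>x. inverse (w x) * indicator B x)"
    "vnorm M (conj_exp p) (\<lambda>x. inverse (w x) * indicator B x) < \<infinity>"
    by (auto simp: ennreal_mult_less_top zero_less_iff_neq_zero)
qed

theorem lemma3p2:
  fixes d :: "'a \<Rightarrow> 'a \<Rightarrow> real" and M :: "'a measure"
    and p :: "'a \<Rightarrow> ereal" and w :: "'a \<Rightarrow> ennreal"
  assumes "homogeneous_type d M"
    and "exponent M p"
    and "A_p d M p w"
  shows "\<exists>C::real. \<forall>B E. is_qball (space M) d B \<longrightarrow> E \<in> sets M \<longrightarrow> E \<subseteq> B \<longrightarrow>
           emeasure M E / emeasure M B
             \<le> ennreal C * (vnorm M p (\<lambda>x. w x * indicator E x) / vnorm M p (\<lambda>x. w x * indicator B x))"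
proof -
  obtain K where K: "\<And>B. is_qball (space M) d B \<Longrightarrow>
      vnorm M p (\<lambda>x. w x * indicator B x) * vnorm M (conj_exp p) (\<lambda>x. inverse (w x) * indicator B x)
        \<le> ennreal K * emeasure M B"
    and weight: "weight d M w"
    using assms(3) unfolding A_p_def by blast
  have [measurable]: "w \<in> borel_measurable M" and w: "AE x in M. 0 < w x \<and> w x < \<infinity>"
    using weight by (auto simp: weight_def)
  show ?thesis
  proof (intro exI[of _ "2 * K"] allI impI)
    fix B E assume B: "is_qball (space M) d B" and [measurable]: "E \<in> sets M" and "E \<subseteq> B"
    note bounds = vnorm_weight_indicator_bounds[OF assms(1,2) weight B K[OF B]]
    have [measurable]: "B \<in> sets M"
      using assms(1) B by (rule sets_qball)
    have "emeasure M E \<le> 2 * vnorm M p (\<lambda>x. w x * indicator E x)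
        * vnorm M (conj_exp p) (\<lambda>x. inverse (w x) * indicator B x)"
      unfolding emeasure_eq_nn_integral_weight_inverse[OF w \<open>E \<in> sets M\<close> \<open>E \<subseteq> B\<close>]
      using assms(2) bounds by (intro holder_vnorm) auto
    then have "emeasure M E / emeasure M B
        \<le> 2 * ennreal K * (vnorm M p (\<lambda>x. w x * indicator E x) / vnorm M p (\<lambda>x. w x * indicator B x))"
      using K[OF B] bounds emeasure_qball_pos[OF assms(1) B] emeasure_qball_finite[OF assms(1) B]
      by (intro ennreal_ratio_le) auto
    then show "emeasure M E / emeasure M B
        \<le> ennreal (2 * K) * (vnorm M p (\<lambda>x. w x * indicator E x) / vnorm M p (\<lambda>x. w x * indicator B x))"
      by (simp add: ennreal_mult')
  qed
qed

end
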